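(* Suppose that $A=\{a_1<a_2<\cdots<a_n\}$ is a set of integers with $a_1=1$ such that $A\oplus A\supseteq[k,k+m-1]$ for some integers $k$ and $m$. If $a_n\le m$, then $\mathcal M(n)\ge m-n$.
   Context: For a set $A$ of integers, $A\oplus A=\{a+b: a,b\in A,\ a\ne b\}$; $[x,y]$ denotes the set of integers $i$ with $x\le i\le y$, and $[m]=\{1,\dots,m\}$. An edge-magic labelling of a graph $G$ with $n$ vertices and $m'$ edges is a bijection $l:V(G)\cup E(G)\to[m'+n]$ such that $l(a)+l(b)+l(ab)$ is the same for all edges $ab$; $G$ is edge-magic if it admits one. $\mathcal M(n)$ denotes the maximum number of edges of an edge-magic graph with $n$ vertices. *)

theory Defs
  imports Main
begin

definition rsumset :: "int set \<Rightarrow> int set" where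
  "rsumset A = {a + b | a b. a \<in> A \<and> b \<in> A \<and> a \<noteq> b}"

definition simple_graph_edges :: "nat \<Rightarrow> nat set set \<Rightarrow> bool" where
  "simple_graph_edges n E \<longleftrightarrow> E \<subseteq> {e. e \<subseteq> {..<n} \<and> card e = 2}"

definition edge_magic_labelling :: "nat \<Rightarrow> nat set set \<Rightarrow> (nat + nat set \<Rightarrow> nat) \<Rightarrow> bool" where
  "edge_magic_labelling n E l \<longleftrightarrow>
     bij_betw l (Inl ` {..<n} \<union> Inr ` E) {1..card E + n} \<and>
     (\<exists>c. \<forall>a b. {a, b} \<in> E \<longrightarrow> l (Inl a) + l (Inl b) + l (Inr {a, b}) = c)"

definition edge_magic :: "nat \<Rightarrow> nat set set \<Rightarrow> bool" where
  "edge_magic n E \<longleftrightarrow> simple_graph_edges n E \<and> (\<exists>l. edge_magic_labelling n E l)"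

definition M :: "nat \<Rightarrow> nat" where
  "M n = Max {card E | E. edge_magic n E}"

end

theory Submission
  imports Defs
begin

text \<open>Enumerate \<open>A\<close> as the vertex labels of a graph on \<open>n = |A|\<close> vertices. Every
  \<open>x \<in> [1,m] \<setminus> A\<close> has \<open>k + m - x \<in> [k, k+m-1] \<subseteq> A \<oplus> A\<close>, so \<open>k + m - x = a + b\<close> with
  \<open>a \<noteq> b\<close> in \<open>A\<close>; join the vertices labelled \<open>a\<close> and \<open>b\<close> by an edge labelled \<open>x\<close>.
  Distinct \<open>x\<close> give distinct label sums, hence distinct edges, so the graph has \<open>m - n\<close>
  edges; since \<open>a\<^sub>1 = 1\<close> and \<open>a\<^sub>n \<le> m\<close>, the labels fill \<open>[1,m]\<close> exactly, and every edge
  has label sum \<open>k + m\<close>.\<close>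

lemma finite_edge_magic_cards: "finite {card E | E. edge_magic n E}"
proof (rule finite_subset)
  show "{card E | E. edge_magic n E} \<subseteq> card ` Pow (Pow {..<n})"
    by (auto simp: edge_magic_def simple_graph_edges_def)
qed simp

lemma card_le_M: "edge_magic n E \<Longrightarrow> card E \<le> M n"
  unfolding M_def by (rule Max_ge[OF finite_edge_magic_cards]) blast

text \<open>Vertex \<open>i\<close> is labelled \<open>f i\<close> and edge \<open>e\<close> is labelled \<open>c - \<Sum>f e\<close>; labels covering
  \<open>[1, |E| + n]\<close> are bijective by counting.\<close>
lemma edge_magic_if_labels_cover:
  fixes f :: "nat \<Rightarrow> int" and c :: int
  assumes graph: "simple_graph_edges n E"
    and cover: "f ` {..<n} \<union> (\<lambda>e. c - sum f e) ` E = {1..int (card E + n)}"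
  shows "edge_magic n E"
proof -
  define V :: "(nat + nat set) set" where "V = Inl ` {..<n} \<union> Inr ` E"
  define l where "l v = (case v of Inl i \<Rightarrow> nat (f i) | Inr e \<Rightarrow> nat (c - sum f e))" for v
  have "finite E"
    using graph unfolding simple_graph_edges_def by (auto intro: finite_subset)
  then have "finite V"
    unfolding V_def by simp
  have "card V = card E + n"
    unfolding V_def using \<open>finite E\<close> by (subst card_Un_disjoint) (auto simp: card_image)
  have "l ` V = nat ` (f ` {..<n} \<union> (\<lambda>e. c - sum f e) ` E)"
    unfolding V_def l_def by (auto simp: image_image image_Un)
  also have "\<dots> = nat ` int ` {1..card E + n}"
    unfolding cover by (simp add: image_int_atLeastAtMost)
  also have "\<dots> = {1..card E + n}"
    by (simp add: image_image)
  finally have "l ` V = {1..card E + n}" .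
  with \<open>finite V\<close> \<open>card V = card E + n\<close> have "bij_betw l V {1..card E + n}"
    by (simp add: bij_betw_def inj_on_iff_eq_card)
  moreover have "l (Inl a) + l (Inl b) + l (Inr {a, b}) = nat c" if "{a, b} \<in> E" for a b
  proof -
    have "card {a, b} = 2"
      using that graph unfolding simple_graph_edges_def by auto
    then have "a \<noteq> b" by auto
    have "a < n" "b < n"
      using that graph unfolding simple_graph_edges_def by auto
    then have "f a \<ge> 1" "f b \<ge> 1" "c - sum f {a, b} \<ge> 1"
      using that cover by force+
    with \<open>a \<noteq> b\<close> show ?thesis
      unfolding l_def by simp
  qed
  ultimately show ?thesis
    using graph unfolding edge_magic_def edge_magic_labelling_def V_def by blast
qed

lemma rsumset_imageE:
  assumes "s \<in> rsumset (f ` I)"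
  obtains e where "e \<subseteq> I" "card e = 2" "sum f e = s"
proof -
  from assms obtain i j where "i \<in> I" "j \<in> I" "f i \<noteq> f j" "s = f i + f j"
    unfolding rsumset_def by blast
  moreover from \<open>f i \<noteq> f j\<close> have "i \<noteq> j" by blast
  ultimately have "{i, j} \<subseteq> I" "card {i, j} = 2" "sum f {i, j} = s"
    by auto
  then show ?thesis ..
qed

lemma edge_magic_graph_from_rsumset:
  fixes A :: "int set" and k m :: int
  assumes "finite A" and "A \<subseteq> {1..m}" and "{k..k + m - 1} \<subseteq> rsumset A"
  obtains E where "edge_magic (card A) E" and "card E + card A = nat m"
proof -
  define n where "n = card A"
  obtain f where "bij_betw f {..<n} A"
    using ex_bij_betw_nat_finite[OF \<open>finite A\<close>] unfolding n_def lessThan_atLeast0 by blast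
  then have f_image: "f ` {..<n} = A"
    by (simp add: bij_betw_def)
  define S where "S = {1..m} - A"
  have "\<exists>e. e \<subseteq> {..<n} \<and> card e = 2 \<and> sum f e = k + m - x" if "x \<in> S" for x
  proof -
    have "k + m - x \<in> rsumset (f ` {..<n})"
      using that assms(3) unfolding S_def f_image by auto
    then obtain e where "e \<subseteq> {..<n}" "card e = 2" "sum f e = k + m - x"
      by (rule rsumset_imageE)
    then show ?thesis
      by blast
  qed
  then obtain edge where edge: "edge x \<subseteq> {..<n}" "card (edge x) = 2" "sum f (edge x) = k + m - x"
    if "x \<in> S" for x
    by metis
  define E where "E = edge ` S"
  have "inj_on edge S"
  proof (rule inj_onI)
    fix x y assume "x \<in> S" "y \<in> S" "edge x = edge y"
    then have "k + m - x = k + m - y"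
      using edge(3) by metis
    then show "x = y" by simp
  qed
  then have "card E = card S"
    unfolding E_def by (rule card_image)
  also have "\<dots> = nat m - n"
    unfolding S_def n_def using card_Diff_subset[OF assms(1,2)] by simp
  finally have card_E: "card E + n = nat m"
    using card_mono[OF _ assms(2)] unfolding n_def by simp
  have "simple_graph_edges n E"
    unfolding simple_graph_edges_def E_def using edge(1,2) by auto
  moreover have "f ` {..<n} \<union> (\<lambda>e. k + m - sum f e) ` E = {1..int (card E + n)}"
  proof -
    have "(\<lambda>e. k + m - sum f e) ` E = S"
      unfolding E_def image_image using edge(3) by simp
    then have "f ` {..<n} \<union> (\<lambda>e. k + m - sum f e) ` E = {1..m}"
      unfolding f_image S_def using assms(2) by blast
    also have "\<dots> = {1..int (card E + n)}"
      unfolding card_E by (cases "0 \<le> m") auto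
    finally show ?thesis .
  qed
  ultimately have "edge_magic n E"
    by (rule edge_magic_if_labels_cover)
  then show ?thesis
    using card_E unfolding n_def by (rule that)
qed

theorem lemma1:
  fixes A :: "int set" and k m :: int
  assumes "finite A"
    and "A \<noteq> {}"
    and "Min A = 1"
    and "{k..k + m - 1} \<subseteq> rsumset A"
    and "Max A \<le> m"
  shows "int (M (card A)) \<ge> m - int (card A)"
proof -
  have A_sub: "A \<subseteq> {1..m}"
  proof
    fix a assume "a \<in> A"
    with assms(1,3,5) show "a \<in> {1..m}"
      by (metis Max_ge Min_le atLeastAtMost_iff order_trans)
  qed
  obtain E where "edge_magic (card A) E" and "card E + card A = nat m"
    by (rule edge_magic_graph_from_rsumset[OF assms(1) A_sub assms(4)])
  then have "card E \<le> M (card A)" and "m - int (card A) \<le> int (card E)"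
    by (simp_all add: card_le_M)
  then show ?thesis
    by linarith
qed

end
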